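(* Let $n\ge1$, $1\le d\le n$, and let $\overline{\mathsf{Del}}(n,d)$ be the LP: maximize $\sum_{\mathbf{x}\in\{0,1\}^n}f(\mathbf{x})$ over $f:\{0,1\}^n\to\mathbb{R}$ subject to $f(\mathbf{x})\ge0$ for all $\mathbf{x}$; $\widehat f(\mathbf{s})\ge0$ for all $\mathbf{s}$; $f(\mathbf{x})=0$ whenever $1\le w(\mathbf{x})\le d-1$; and $f(0^n)\le\mathrm{OPT}(\mathsf{Del}(n,d))$. Then every optimal solution of $\overline{\mathsf{Del}}(n,d)$ satisfies $f(0^n)=\mathrm{OPT}(\mathsf{Del}(n,d))$, and $\mathrm{OPT}(\overline{\mathsf{Del}}(n,d))=\big(\mathrm{OPT}(\mathsf{Del}(n,d))\big)^2$.
   Context: Fourier transform: $\widehat{f}(\mathbf{s})=2^{-n}\sum_{\mathbf{x}\in\{0,1\}^n}f(\mathbf{x})(-1)^{\mathbf{x}\cdot\mathbf{s}}$. $w(\mathbf{x})$ is Hamming weight. $\mathrm{OPT}$ denotes the optimal value of an LP. $\mathsf{Del}(n,d)$: maximize $\sum_{\mathbf{x}}f(\mathbf{x})$ over $f:\{0,1\}^n\to\mathbb{R}$ subject to $f\ge0$, $\widehat f\ge0$, $f(\mathbf{x})=0$ whenever $1\le w(\mathbf{x})\le d-1$, $f(0^n)=1$. *)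

theory Defs
  imports Complex_Main
begin

text \<open>Points of the Boolean cube {0,1}^n are bool lists of length n (True = 1).\<close>

definition cube :: "nat \<Rightarrow> bool list set" where
  "cube n = {x. length x = n}"

definition zero_vec :: "nat \<Rightarrow> bool list" where
  "zero_vec n = replicate n False"

definition hweight :: "bool list \<Rightarrow> nat" where
  "hweight x = length (filter id x)"

definition dotp :: "bool list \<Rightarrow> bool list \<Rightarrow> nat" where
  "dotp x s = card {i. i < length x \<and> i < length s \<and> x ! i \<and> s ! i}"

definition fourier :: "nat \<Rightarrow> (bool list \<Rightarrow> real) \<Rightarrow> bool list \<Rightarrow> real" where
  "fourier n f s = (1 / 2 ^ n) * (\<Sum>x\<in>cube n. f x * (-1) ^ dotp x s)"

definition Del_feasible :: "nat \<Rightarrow> nat \<Rightarrow> (bool list \<Rightarrow> real) \<Rightarrow> bool" where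
  "Del_feasible n d f \<longleftrightarrow>
     (\<forall>x\<in>cube n. f x \<ge> 0) \<and> (\<forall>s\<in>cube n. fourier n f s \<ge> 0) \<and>
     (\<forall>x\<in>cube n. 1 \<le> hweight x \<and> hweight x \<le> d - 1 \<longrightarrow> f x = 0) \<and>
     f (zero_vec n) = 1"

definition OPT_Del :: "nat \<Rightarrow> nat \<Rightarrow> real" where
  "OPT_Del n d = Sup {(\<Sum>x\<in>cube n. f x) | f. Del_feasible n d f}"

definition Delbar_feasible :: "nat \<Rightarrow> nat \<Rightarrow> (bool list \<Rightarrow> real) \<Rightarrow> bool" where
  "Delbar_feasible n d f \<longleftrightarrow>
     (\<forall>x\<in>cube n. f x \<ge> 0) \<and> (\<forall>s\<in>cube n. fourier n f s \<ge> 0) \<and>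
     (\<forall>x\<in>cube n. 1 \<le> hweight x \<and> hweight x \<le> d - 1 \<longrightarrow> f x = 0) \<and>
     f (zero_vec n) \<le> OPT_Del n d"

definition OPT_Delbar :: "nat \<Rightarrow> nat \<Rightarrow> real" where
  "OPT_Delbar n d = Sup {(\<Sum>x\<in>cube n. f x) | f. Delbar_feasible n d f}"

definition Delbar_optimal :: "nat \<Rightarrow> nat \<Rightarrow> (bool list \<Rightarrow> real) \<Rightarrow> bool" where
  "Delbar_optimal n d f \<longleftrightarrow>
     Delbar_feasible n d f \<and> (\<forall>g. Delbar_feasible n d g \<longrightarrow> (\<Sum>x\<in>cube n. g x) \<le> (\<Sum>x\<in>cube n. f x))"

end

theory Submission
  imports Defs
begin

text \<open>
  If f is feasible for the relaxation, the nonnegative Fourier coefficients give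
  \<open>\<Sum>\<^sub>x f x = 2^n \<cdot> fourier f 0 \<le> 2^n \<cdot> \<Sum>\<^sub>s fourier f s = 2^n \<cdot> f 0\<close>; so either the whole sum
  vanishes or \<open>f / f 0\<close> is feasible for Del(n,d), and in both cases
  \<open>\<Sum>\<^sub>x f x \<le> f 0 \<cdot> OPT \<le> OPT\<^sup>2\<close>. Conversely \<open>OPT \<cdot> g\<close> is feasible for the relaxation whenever g
  is feasible for Del(n,d), which gives \<open>OPT\<^sup>2\<close> from below and, at an optimum f, the chain
  \<open>OPT\<^sup>2 \<le> \<Sum>\<^sub>x f x \<le> f 0 \<cdot> OPT\<close>; dividing by \<open>OPT \<ge> 1\<close> (the indicator of 0 is feasible) forces
  \<open>f 0 = OPT\<close>.
\<close>

lemma cube_0: "cube 0 = {[]}"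
  by (auto simp: cube_def)

lemma cube_Suc: "cube (Suc n) = (\<lambda>(b, s). b # s) ` (UNIV \<times> cube n)"
proof
  show "cube (Suc n) \<subseteq> (\<lambda>(b, s). b # s) ` (UNIV \<times> cube n)"
  proof
    fix x assume "x \<in> cube (Suc n)"
    then obtain b s where "x = b # s" "length s = n"
      by (cases x) (auto simp: cube_def)
    then show "x \<in> (\<lambda>(b, s). b # s) ` (UNIV \<times> cube n)"
      by (auto simp: cube_def)
  qed
qed (auto simp: cube_def)

lemma finite_cube: "finite (cube n)"
  by (induction n) (auto simp: cube_0 cube_Suc)

lemma zero_vec_in_cube: "zero_vec n \<in> cube n"
  by (simp add: cube_def zero_vec_def)

lemma hweight_zero_vec: "hweight (zero_vec n) = 0"
  by (simp add: hweight_def zero_vec_def)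

lemma dotp_zero_vec_left: "dotp (zero_vec n) s = 0"
  by (auto simp: dotp_def zero_vec_def)

lemma dotp_zero_vec_right: "dotp x (zero_vec n) = 0"
  by (auto simp: dotp_def zero_vec_def)

lemma dotp_Cons: "dotp (a # x) (b # s) = (if a \<and> b then 1 else 0) + dotp x s"
proof -
  let ?A = "{i. i < length x \<and> i < length s \<and> x ! i \<and> s ! i}"
  have "{i. i < length (a # x) \<and> i < length (b # s) \<and> (a # x) ! i \<and> (b # s) ! i}
        = (if a \<and> b then {0} else {}) \<union> Suc ` ?A" (is "?L = ?R")
  proof (rule set_eqI)
    fix i show "i \<in> ?L \<longleftrightarrow> i \<in> ?R"
      by (cases i) (auto simp: inj_image_mem_iff)
  qed
  moreover have "card (Suc ` ?A) = card ?A"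
    by (simp add: card_image)
  ultimately show ?thesis
    unfolding dotp_def by auto
qed

lemma sum_character_cube:
  "x \<in> cube n \<Longrightarrow> (\<Sum>s\<in>cube n. (-1::real) ^ dotp x s) = (if x = zero_vec n then 2 ^ n else 0)"
proof (induction n arbitrary: x)
  case 0
  then show ?case by (simp add: cube_0 zero_vec_def dotp_def)
next
  case (Suc n)
  obtain a y where x: "x = a # y" "y \<in> cube n"
    using Suc.prems by (cases x) (auto simp: cube_def)
  have "inj_on (\<lambda>(b, s). b # s) (UNIV \<times> cube n)"
    by (auto simp: inj_on_def)
  then have "(\<Sum>s\<in>cube (Suc n). (-1::real) ^ dotp x s)
      = (\<Sum>(b, s)\<in>UNIV \<times> cube n. (-1::real) ^ dotp x (b # s))"
    unfolding cube_Suc by (simp add: sum.reindex case_prod_unfold)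
  also have "\<dots> = (\<Sum>b\<in>UNIV. \<Sum>s\<in>cube n. (-1::real) ^ dotp x (b # s))"
    by (simp add: sum.cartesian_product case_prod_unfold)
  also have "\<dots> = (\<Sum>s\<in>cube n. (-1::real) ^ dotp y s) * (1 + (if a then -1 else 1))"
    using x by (simp add: UNIV_bool dotp_Cons sum_distrib_left algebra_simps sum.distrib)
  also have "\<dots> = (if x = zero_vec (Suc n) then 2 ^ Suc n else 0)"
    using Suc.IH[OF x(2)] x by (auto simp: zero_vec_def)
  finally show ?case .
qed

lemma sum_fourier_cube: "(\<Sum>s\<in>cube n. fourier n f s) = f (zero_vec n)"
proof -
  have "(\<Sum>s\<in>cube n. fourier n f s)
      = (1 / 2 ^ n) * (\<Sum>x\<in>cube n. f x * (\<Sum>s\<in>cube n. (-1::real) ^ dotp x s))"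
    unfolding fourier_def sum_distrib_left[symmetric]
    by (subst sum.swap) (simp add: sum_distrib_left)
  also have "\<dots> = (1 / 2 ^ n) * (\<Sum>x\<in>cube n. if x = zero_vec n then f x * 2 ^ n else 0)"
    by (auto intro!: sum.cong simp: sum_character_cube)
  also have "\<dots> = f (zero_vec n)"
    using finite_cube zero_vec_in_cube by (simp add: sum.delta)
  finally show ?thesis .
qed

lemma sum_cube_eq_fourier_zero_vec: "(\<Sum>x\<in>cube n. f x) = 2 ^ n * fourier n f (zero_vec n)"
  by (simp add: fourier_def dotp_zero_vec_right)

lemma sum_cube_le_fourier_nonneg:
  assumes "\<forall>s\<in>cube n. fourier n f s \<ge> 0"
  shows "(\<Sum>x\<in>cube n. f x) \<le> 2 ^ n * f (zero_vec n)"
proof -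
  have "(\<Sum>x\<in>cube n. f x) = 2 ^ n * fourier n f (zero_vec n)"
    by (rule sum_cube_eq_fourier_zero_vec)
  also have "\<dots> \<le> 2 ^ n * (\<Sum>s\<in>cube n. fourier n f s)"
    using assms finite_cube zero_vec_in_cube by (intro mult_left_mono member_le_sum) auto
  also have "\<dots> = 2 ^ n * f (zero_vec n)"
    by (simp only: sum_fourier_cube)
  finally show ?thesis .
qed

lemma fourier_scale: "fourier n (\<lambda>x. c * g x) s = c * fourier n g s"
  by (simp add: fourier_def sum_distrib_left algebra_simps)

lemma fourier_indicator_zero_vec:
  "fourier n (\<lambda>x. if x = zero_vec n then 1 else 0) s = 1 / 2 ^ n"
proof -
  have "(\<Sum>x\<in>cube n. (if x = zero_vec n then 1 else 0) * (-1::real) ^ dotp x s)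
      = (\<Sum>x\<in>cube n. if x = zero_vec n then (-1) ^ dotp x s else 0)"
    by (intro sum.cong) auto
  also have "\<dots> = 1"
    using finite_cube zero_vec_in_cube by (simp add: dotp_zero_vec_left)
  finally show ?thesis
    by (simp add: fourier_def)
qed

lemma Del_feasible_indicator_zero_vec:
  "Del_feasible n d (\<lambda>x. if x = zero_vec n then 1 else 0)"
  by (auto simp: Del_feasible_def fourier_indicator_zero_vec hweight_zero_vec)

lemma bdd_above_Del: "bdd_above {(\<Sum>x\<in>cube n. f x) | f. Del_feasible n d f}"
  by (rule bdd_aboveI[of _ "2 ^ n"])
    (auto simp: Del_feasible_def dest!: sum_cube_le_fourier_nonneg)

lemma Del_sum_le_OPT_Del: "Del_feasible n d g \<Longrightarrow> (\<Sum>x\<in>cube n. g x) \<le> OPT_Del n d"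
  unfolding OPT_Del_def by (rule cSup_upper[OF _ bdd_above_Del]) blast

lemma OPT_Del_le:
  assumes "\<And>g. Del_feasible n d g \<Longrightarrow> (\<Sum>x\<in>cube n. g x) \<le> B"
  shows "OPT_Del n d \<le> B"
  unfolding OPT_Del_def using assms Del_feasible_indicator_zero_vec
  by (intro cSup_least) auto

lemma one_le_OPT_Del: "1 \<le> OPT_Del n d"
  using Del_sum_le_OPT_Del[OF Del_feasible_indicator_zero_vec]
  by (simp add: finite_cube zero_vec_in_cube sum.delta)

lemma Delbar_feasible_scale_Del:
  assumes "Del_feasible n d g" "0 \<le> c" "c \<le> OPT_Del n d"
  shows "Delbar_feasible n d (\<lambda>x. c * g x)"
  using assms by (auto simp: Delbar_feasible_def Del_feasible_def fourier_scale)

lemma Del_feasible_normalize: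
  assumes "Delbar_feasible n d f" "f (zero_vec n) > 0"
  shows "Del_feasible n d (\<lambda>x. (1 / f (zero_vec n)) * f x)"
  unfolding Del_feasible_def fourier_scale using assms by (auto simp: Delbar_feasible_def)

lemma Delbar_sum_le_scaled_OPT_Del:
  assumes f: "Delbar_feasible n d f"
  shows "(\<Sum>x\<in>cube n. f x) \<le> f (zero_vec n) * OPT_Del n d"
proof -
  let ?c = "f (zero_vec n)"
  consider "?c = 0" | "?c > 0"
    using f zero_vec_in_cube by (force simp: Delbar_feasible_def)
  then show ?thesis
  proof cases
    case 1
    then show ?thesis
      using f sum_cube_le_fourier_nonneg[of n f] by (simp add: Delbar_feasible_def)
  next
    case 2
    have "(1 / ?c) * (\<Sum>x\<in>cube n. f x) \<le> OPT_Del n d"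
      using Del_sum_le_OPT_Del[OF Del_feasible_normalize[OF f 2]]
      by (simp add: sum_distrib_left)
    with 2 show ?thesis
      by (simp add: field_simps)
  qed
qed

lemma Delbar_sum_le_OPT_Del_sq:
  assumes "Delbar_feasible n d f"
  shows "(\<Sum>x\<in>cube n. f x) \<le> (OPT_Del n d)\<^sup>2"
proof -
  have "f (zero_vec n) * OPT_Del n d \<le> OPT_Del n d * OPT_Del n d"
    using assms one_le_OPT_Del[of n d] by (intro mult_right_mono) (auto simp: Delbar_feasible_def)
  then show ?thesis
    using Delbar_sum_le_scaled_OPT_Del[OF assms] by (simp add: power2_eq_square)
qed

lemma OPT_Del_sq_le:
  assumes "\<And>g. Del_feasible n d g \<Longrightarrow> OPT_Del n d * (\<Sum>x\<in>cube n. g x) \<le> B"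
  shows "(OPT_Del n d)\<^sup>2 \<le> B"
proof -
  have pos: "0 < OPT_Del n d"
    using one_le_OPT_Del[of n d] by simp
  have "OPT_Del n d \<le> B / OPT_Del n d"
    using assms pos by (intro OPT_Del_le) (simp add: field_simps)
  with pos show ?thesis
    by (simp add: field_simps power2_eq_square)
qed

lemma OPT_Del_mult_sum_le_Delbar:
  assumes "Del_feasible n d g"
    and "\<And>f. Delbar_feasible n d f \<Longrightarrow> (\<Sum>x\<in>cube n. f x) \<le> B"
  shows "OPT_Del n d * (\<Sum>x\<in>cube n. g x) \<le> B"
  using assms one_le_OPT_Del[of n d] Delbar_feasible_scale_Del[of n d g "OPT_Del n d"]
  by (simp add: sum_distrib_left)

lemma OPT_Delbar_eq: "OPT_Delbar n d = (OPT_Del n d)\<^sup>2"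
proof (rule antisym)
  have "Delbar_feasible n d (\<lambda>x. OPT_Del n d * (if x = zero_vec n then 1 else 0))"
    using one_le_OPT_Del[of n d] by (intro Delbar_feasible_scale_Del Del_feasible_indicator_zero_vec) auto
  then show "OPT_Delbar n d \<le> (OPT_Del n d)\<^sup>2"
    unfolding OPT_Delbar_def by (intro cSup_least) (auto dest: Delbar_sum_le_OPT_Del_sq)
  have "bdd_above {(\<Sum>x\<in>cube n. f x) | f. Delbar_feasible n d f}"
    by (rule bdd_aboveI) (auto dest: Delbar_sum_le_OPT_Del_sq)
  then have "Delbar_feasible n d f \<Longrightarrow> (\<Sum>x\<in>cube n. f x) \<le> OPT_Delbar n d" for f
    unfolding OPT_Delbar_def by (intro cSup_upper) blast+
  then show "(OPT_Del n d)\<^sup>2 \<le> OPT_Delbar n d"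
    by (intro OPT_Del_sq_le OPT_Del_mult_sum_le_Delbar)
qed

lemma Delbar_optimal_at_zero_vec:
  assumes opt: "Delbar_optimal n d f"
  shows "f (zero_vec n) = OPT_Del n d"
proof -
  have f: "Delbar_feasible n d f"
    using opt by (simp add: Delbar_optimal_def)
  have "OPT_Del n d * OPT_Del n d \<le> (\<Sum>x\<in>cube n. f x)"
    using opt unfolding power2_eq_square[symmetric]
    by (intro OPT_Del_sq_le OPT_Del_mult_sum_le_Delbar) (auto simp: Delbar_optimal_def)
  also have "\<dots> \<le> f (zero_vec n) * OPT_Del n d"
    by (rule Delbar_sum_le_scaled_OPT_Del[OF f])
  finally have "OPT_Del n d \<le> f (zero_vec n)"
    using one_le_OPT_Del[of n d] by simp
  moreover have "f (zero_vec n) \<le> OPT_Del n d"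
    using f by (simp add: Delbar_feasible_def)
  ultimately show ?thesis
    by simp
qed

theorem mainTheorem5:
  fixes n d :: nat
  assumes "1 \<le> n" and "1 \<le> d" and "d \<le> n"
  shows "(\<forall>f. Delbar_optimal n d f \<longrightarrow> f (zero_vec n) = OPT_Del n d)
         \<and> OPT_Delbar n d = (OPT_Del n d)\<^sup>2"
  using Delbar_optimal_at_zero_vec OPT_Delbar_eq by blast

end
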